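(* Let $(\mathcal{E},\mathcal{L},\mathcal{B})$ be a weakly left resolving labelled space with associated inverse semigroup $S$, let $\xi$ be a filter in $E(S)$ of finite type with word $\alpha\in\mathcal{L}^*$, and for $0\le n\le|\alpha|$ let $\mathcal{F}_n=\{A\in\mathcal{B}:(\alpha_{1,n},A,\alpha_{1,n})\in\xi\}$. Then (i) $\mathcal{F}_n$ is a filter in $\mathcal{B}_{\alpha_{1,n}}$ for every $1\le n\le|\alpha|$, and $\mathcal{F}_0$ is either empty or a filter in $\mathcal{B}$; (ii) $\mathcal{F}_n=\{A\in\mathcal{B}_{\alpha_{1,n}}: r(A,\alpha_{n+1,m})\in\mathcal{F}_m\}$ for all $0\le n<m\le|\alpha|$.
   Context: A directed graph $\mathcal{E}=(\mathcal{E}^0,\mathcal{E}^1,r,s)$ has countable nonempty vertex set, edge set, range/source maps; paths satisfy $r(\lambda_i)=s(\lambda_{i+1})$. A labelled graph has a surjective labelling $\mathcal{L}:\mathcal{E}^1\to\mathcal{A}$ extended letterwise to paths. $\omega$ is the empty word, $\mathcal{L}^+=\bigcup_{n\ge1}\mathcal{L}(\mathcal{E}^n)$, $\mathcal{L}^*=\{\omega\}\cup\mathcal{L}^+$; $\alpha_{i,j}=\alpha_i\cdots\alpha_j$, $\alpha_{1,0}=\omega$. For $A\subseteq\mathcal{E}^0$, $\alpha\in\mathcal{L}^+$: $r(A,\alpha)=\{r(\lambda):\mathcal{L}(\lambda)=\alpha,\ s(\lambda)\in A\}$, $r(A,\omega)=A$, $r(\alpha)=r(\mathcal{E}^0,\alpha)$.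 $\mathcal{B}$ accommodating: closed under $r(\cdot,\alpha)$, finite intersections and unions, contains $r(\alpha)$ for $\alpha\in\mathcal{L}^+$; labelled space weakly left resolving if $r(A\cap B,\alpha)=r(A,\alpha)\cap r(B,\alpha)$ for $A,B\in\mathcal{B}$, $\alpha\in\mathcal{L}^+$. $\mathcal{B}_\alpha=\mathcal{B}\cap\mathcal{P}(r(\alpha))$. $S$ = triples $(\alpha,A,\beta)$, $\alpha,\beta\in\mathcal{L}^*$, $\emptyset\ne A\in\mathcal{B}_\alpha\cap\mathcal{B}_\beta$, plus $0$; product $(\alpha,A,\beta)(\gamma,B,\delta)=(\alpha\gamma',r(A,\gamma')\cap B,\delta)$ if $\gamma=\beta\gamma'$, $=(\alpha,A\cap r(B,\beta'),\delta\beta')$ if $\beta=\gamma\beta'$, $=0$ otherwise (empty middle entry identified with $0$). $E(S)=\{(\alpha,A,\alpha)\}\cup\{0\}$, $p\le q$ iff $pq=p$; $(\alpha,A,\alpha)\le(\beta,B,\beta)$ iff $\alpha=\beta\alpha'$ and $A\subseteq r(B,\alpha')$. A filter in a poset with least element $0$ is a nonempty upward-closed subset not containing $0$ in which any two elements have a common lower bound in it; filters in $\mathcal{B}_\alpha$ are under inclusion. The words of any two elements of a filter in $E(S)$ are comparable; a filter $\xi$ is of finite type if among the words $\beta$ with $(\beta,B,\beta)\in\xi$ there is one of largest length, called the word of $\xi$. *)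

theory Defs
  imports Main "HOL-Library.Countable_Set"
begin

text \<open>A labelled graph additionally has a labelling lab (the alphabet is
the image lab ` Ed, so surjectivity is automatic).  Words are lists of labels;
the empty word is the empty list.\<close>

definition directed_graph :: "'v set \<Rightarrow> 'e set \<Rightarrow> ('e \<Rightarrow> 'v) \<Rightarrow> ('e \<Rightarrow> 'v) \<Rightarrow> bool" where
  "directed_graph V Ed rg sc \<longleftrightarrow> V \<noteq> {} \<and> countable V \<and> countable Ed \<and>
     (\<forall>e\<in>Ed. rg e \<in> V \<and> sc e \<in> V)"

definition is_path :: "'e set \<Rightarrow> ('e \<Rightarrow> 'v) \<Rightarrow> ('e \<Rightarrow> 'v) \<Rightarrow> 'e list \<Rightarrow> bool" where
  "is_path Ed rg sc p \<longleftrightarrow> p \<noteq> [] \<and> set p \<subseteq> Ed \<and>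
     (\<forall>i. Suc i < length p \<longrightarrow> rg (p ! i) = sc (p ! Suc i))"

definition Lplus :: "'e set \<Rightarrow> ('e \<Rightarrow> 'v) \<Rightarrow> ('e \<Rightarrow> 'v) \<Rightarrow> ('e \<Rightarrow> 'a) \<Rightarrow> 'a list set" where
  "Lplus Ed rg sc lab = {map lab p | p. is_path Ed rg sc p}"

definition Lstar :: "'e set \<Rightarrow> ('e \<Rightarrow> 'v) \<Rightarrow> ('e \<Rightarrow> 'v) \<Rightarrow> ('e \<Rightarrow> 'a) \<Rightarrow> 'a list set" where
  "Lstar Ed rg sc lab = insert [] (Lplus Ed rg sc lab)"

definition relr :: "'e set \<Rightarrow> ('e \<Rightarrow> 'v) \<Rightarrow> ('e \<Rightarrow> 'v) \<Rightarrow> ('e \<Rightarrow> 'a) \<Rightarrow> 'v set \<Rightarrow> 'a list \<Rightarrow> 'v set" where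
  "relr Ed rg sc lab A w = (if w = [] then A else
     {rg (last p) | p. is_path Ed rg sc p \<and> map lab p = w \<and> sc (hd p) \<in> A})"

definition Bsub :: "'v set \<Rightarrow> 'e set \<Rightarrow> ('e \<Rightarrow> 'v) \<Rightarrow> ('e \<Rightarrow> 'v) \<Rightarrow> ('e \<Rightarrow> 'a) \<Rightarrow> 'v set set \<Rightarrow> 'a list \<Rightarrow> 'v set set" where
  "Bsub V Ed rg sc lab B w = {A \<in> B. A \<subseteq> relr Ed rg sc lab V w}"

definition accommodating :: "'v set \<Rightarrow> 'e set \<Rightarrow> ('e \<Rightarrow> 'v) \<Rightarrow> ('e \<Rightarrow> 'v) \<Rightarrow> ('e \<Rightarrow> 'a) \<Rightarrow> 'v set set \<Rightarrow> bool" where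
  "accommodating V Ed rg sc lab B \<longleftrightarrow> B \<subseteq> Pow V \<and>
     (\<forall>A\<in>B. \<forall>w\<in>Lplus Ed rg sc lab. relr Ed rg sc lab A w \<in> B) \<and>
     (\<forall>A\<in>B. \<forall>C\<in>B. A \<inter> C \<in> B \<and> A \<union> C \<in> B) \<and>
     (\<forall>w\<in>Lplus Ed rg sc lab. relr Ed rg sc lab V w \<in> B)"

definition labelled_space :: "'v set \<Rightarrow> 'e set \<Rightarrow> ('e \<Rightarrow> 'v) \<Rightarrow> ('e \<Rightarrow> 'v) \<Rightarrow> ('e \<Rightarrow> 'a) \<Rightarrow> 'v set set \<Rightarrow> bool" where
  "labelled_space V Ed rg sc lab B \<longleftrightarrow> directed_graph V Ed rg sc \<and> accommodating V Ed rg sc lab B"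

definition weakly_left_resolving :: "'v set \<Rightarrow> 'e set \<Rightarrow> ('e \<Rightarrow> 'v) \<Rightarrow> ('e \<Rightarrow> 'v) \<Rightarrow> ('e \<Rightarrow> 'a) \<Rightarrow> 'v set set \<Rightarrow> bool" where
  "weakly_left_resolving V Ed rg sc lab B \<longleftrightarrow> labelled_space V Ed rg sc lab B \<and>
     (\<forall>A\<in>B. \<forall>C\<in>B. \<forall>w\<in>Lplus Ed rg sc lab.
        relr Ed rg sc lab (A \<inter> C) w = relr Ed rg sc lab A w \<inter> relr Ed rg sc lab C w)"

text \<open>Elements of the inverse semigroup S: None is 0, Some (a, A, b) is the triple.\<close>
type_synonym ('a, 'v) selt = "('a list \<times> 'v set \<times> 'a list) option"

definition S_set :: "'v set \<Rightarrow> 'e set \<Rightarrow> ('e \<Rightarrow> 'v) \<Rightarrow> ('e \<Rightarrow> 'v) \<Rightarrow> ('e \<Rightarrow> 'a) \<Rightarrow> 'v set set \<Rightarrow> ('a, 'v) selt set" where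
  "S_set V Ed rg sc lab B = insert None
     {Some (a, A, b) | a A b. a \<in> Lstar Ed rg sc lab \<and> b \<in> Lstar Ed rg sc lab \<and> A \<noteq> {} \<and>
        A \<in> Bsub V Ed rg sc lab B a \<and> A \<in> Bsub V Ed rg sc lab B b}"

text \<open>The product of S (an empty middle entry is identified with 0).\<close>
fun smult :: "'e set \<Rightarrow> ('e \<Rightarrow> 'v) \<Rightarrow> ('e \<Rightarrow> 'v) \<Rightarrow> ('e \<Rightarrow> 'a) \<Rightarrow> ('a, 'v) selt \<Rightarrow> ('a, 'v) selt \<Rightarrow> ('a, 'v) selt" where
  "smult Ed rg sc lab (Some (a, A, b)) (Some (c, C, d)) =
     (if \<exists>c'. c = b @ c' then
        (let c' = drop (length b) c; D = relr Ed rg sc lab A c' \<inter> C in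
         if D = {} then None else Some (a @ c', D, d))
      else if \<exists>b'. b = c @ b' then
        (let b' = drop (length c) b; D = A \<inter> relr Ed rg sc lab C b' in
         if D = {} then None else Some (a, D, d @ b'))
      else None)"
| "smult Ed rg sc lab _ _ = None"

definition ES_set :: "'v set \<Rightarrow> 'e set \<Rightarrow> ('e \<Rightarrow> 'v) \<Rightarrow> ('e \<Rightarrow> 'v) \<Rightarrow> ('e \<Rightarrow> 'a) \<Rightarrow> 'v set set \<Rightarrow> ('a, 'v) selt set" where
  "ES_set V Ed rg sc lab B = {p \<in> S_set V Ed rg sc lab B. p = None \<or> (\<exists>a A. p = Some (a, A, a))}"

definition ES_le :: "'e set \<Rightarrow> ('e \<Rightarrow> 'v) \<Rightarrow> ('e \<Rightarrow> 'v) \<Rightarrow> ('e \<Rightarrow> 'a) \<Rightarrow> ('a, 'v) selt \<Rightarrow> ('a, 'v) selt \<Rightarrow> bool" where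
  "ES_le Ed rg sc lab p q \<longleftrightarrow> smult Ed rg sc lab p q = p"

definition is_filter :: "'x set \<Rightarrow> ('x \<Rightarrow> 'x \<Rightarrow> bool) \<Rightarrow> 'x \<Rightarrow> 'x set \<Rightarrow> bool" where
  "is_filter P le z F \<longleftrightarrow> F \<subseteq> P \<and> F \<noteq> {} \<and> z \<notin> F \<and>
     (\<forall>x\<in>F. \<forall>y\<in>P. le x y \<longrightarrow> y \<in> F) \<and>
     (\<forall>x\<in>F. \<forall>y\<in>F. \<exists>w\<in>F. le w x \<and> le w y)"

definition ES_filter :: "'v set \<Rightarrow> 'e set \<Rightarrow> ('e \<Rightarrow> 'v) \<Rightarrow> ('e \<Rightarrow> 'v) \<Rightarrow> ('e \<Rightarrow> 'a) \<Rightarrow> 'v set set \<Rightarrow> ('a, 'v) selt set \<Rightarrow> bool" where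
  "ES_filter V Ed rg sc lab B \<xi> \<longleftrightarrow> is_filter (ES_set V Ed rg sc lab B) (ES_le Ed rg sc lab) None \<xi>"

definition B_filter :: "'v set set \<Rightarrow> 'v set set \<Rightarrow> bool" where
  "B_filter P F \<longleftrightarrow> is_filter P (\<subseteq>) {} F"

definition filter_words :: "('a, 'v) selt set \<Rightarrow> 'a list set" where
  "filter_words \<xi> = {b. \<exists>C. Some (b, C, b) \<in> \<xi>}"

definition finite_type :: "('a, 'v) selt set \<Rightarrow> bool" where
  "finite_type \<xi> \<longleftrightarrow> (\<exists>b\<in>filter_words \<xi>. \<forall>c\<in>filter_words \<xi>. length c \<le> length b)"

definition is_word_of :: "('a, 'v) selt set \<Rightarrow> 'a list \<Rightarrow> bool" where
  "is_word_of \<xi> a \<longleftrightarrow> a \<in> filter_words \<xi> \<and> (\<forall>c\<in>filter_words \<xi>. length c \<le> length a)"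

end

theory Submission
  imports Defs
begin

text \<open>Everything rests on the description of the order on idempotents:
  \<open>(a h, W, a h) \<le> (a, A, a)\<close> iff \<open>W \<subseteq> r(A, h)\<close>.  For a word \<open>w\<close> let
  \<open>slice w = {A. (w, A, w) \<in> \<xi>}\<close>.  Upward closure of \<open>\<xi>\<close> gives upward closure of each slice,
  and a common lower bound \<open>(w h, W, w h)\<close> of \<open>(w, A, w)\<close> and \<open>(w, C, w)\<close> gives
  \<open>W \<subseteq> r(A, h) \<inter> r(C, h) = r(A \<inter> C, h)\<close> by weak left resolvingness, so a nonempty slice is a
  filter.  The element \<open>(\<alpha>, C, \<alpha>)\<close> of \<open>\<xi>\<close> lies below \<open>(u, r(u), u)\<close> for every nonempty
  prefix \<open>u\<close> of \<open>\<alpha>\<close>, so these slices are nonempty; and comparing a common lower bound of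
  \<open>(u, A, u)\<close> and \<open>(u v, D, u v)\<close> shows \<open>r(A, v) \<in> slice (u v)\<close>, while the converse inclusion
  is again upward closure.\<close>

lemma is_path_take: "is_path Ed rg sc p \<Longrightarrow> 0 < k \<Longrightarrow> is_path Ed rg sc (take k p)"
  unfolding is_path_def by (auto dest: in_set_takeD)

lemma is_path_drop: "is_path Ed rg sc p \<Longrightarrow> k < length p \<Longrightarrow> is_path Ed rg sc (drop k p)"
  unfolding is_path_def by (auto dest: in_set_dropD)

lemma is_path_append:
  assumes p: "is_path Ed rg sc p" and q: "is_path Ed rg sc q" and pq: "rg (last p) = sc (hd q)"
  shows "is_path Ed rg sc (p @ q)"
  unfolding is_path_def
proof (intro conjI allI impI)
  fix i assume i: "Suc i < length (p @ q)"
  consider "Suc i < length p" | "Suc i = length p" | "length p \<le> i" by linarith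
  then show "rg ((p @ q) ! i) = sc ((p @ q) ! Suc i)"
  proof cases
    case 1 then show ?thesis using p by (simp add: is_path_def nth_append)
  next
    case 2
    then have "i = length p - 1" by simp
    then show ?thesis using p q pq 2
      by (simp add: is_path_def nth_append last_conv_nth hd_conv_nth)
  next
    case 3 then show ?thesis using q i by (simp add: is_path_def nth_append Suc_diff_le)
  qed
qed (use p q in \<open>auto simp: is_path_def\<close>)

lemma is_path_split:
  assumes p: "is_path Ed rg sc p" and k: "0 < k" "k < length p"
  shows "rg (last (take k p)) = sc (hd (drop k p))"
proof -
  have "last (take k p) = p ! (k - 1)" using k by (subst last_conv_nth) (auto simp: min_def)
  moreover have "hd (drop k p) = p ! k" using k by (simp add: hd_drop_conv_nth)
  moreover have "rg (p ! (k - 1)) = sc (p ! Suc (k - 1))"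
    using p k unfolding is_path_def by simp
  ultimately show ?thesis using k by simp
qed

lemma relr_Nil [simp]: "relr Ed rg sc lab A [] = A"
  by (simp add: relr_def)

lemma relr_empty [simp]: "relr Ed rg sc lab {} w = {}"
  by (simp add: relr_def)

lemma relr_mono: "A \<subseteq> A' \<Longrightarrow> relr Ed rg sc lab A w \<subseteq> relr Ed rg sc lab A' w"
  unfolding relr_def by auto

lemma relr_append:
  "relr Ed rg sc lab (relr Ed rg sc lab A u) v = relr Ed rg sc lab A (u @ v)"
proof (cases "u = [] \<or> v = []")
  case True then show ?thesis by auto
next
  case False
  then have u: "u \<noteq> []" and v: "v \<noteq> []" by auto
  show ?thesis
  proof (intro equalityI subsetI)
    fix x assume "x \<in> relr Ed rg sc lab (relr Ed rg sc lab A u) v"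
    then obtain p q where p: "is_path Ed rg sc p" "map lab p = u" "sc (hd p) \<in> A"
      and q: "is_path Ed rg sc q" "map lab q = v" "sc (hd q) = rg (last p)" "x = rg (last q)"
      using u v by (auto simp: relr_def)
    have "p \<noteq> []" "q \<noteq> []" using p q by (auto simp: is_path_def)
    moreover have "is_path Ed rg sc (p @ q)" using is_path_append p q by metis
    ultimately show "x \<in> relr Ed rg sc lab A (u @ v)" using u p q
      unfolding relr_def by (auto intro!: exI[of _ "p @ q"])
  next
    fix x assume "x \<in> relr Ed rg sc lab A (u @ v)"
    then obtain p where p: "is_path Ed rg sc p" "map lab p = u @ v" "sc (hd p) \<in> A" "x = rg (last p)"
      using u by (auto simp: relr_def)
    let ?k = "length u"
    have k: "0 < ?k" "?k < length p" using u v arg_cong[OF p(2), of length] by auto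
    have "map lab (take ?k p) = u" "map lab (drop ?k p) = v"
      using p(2) by (metis append_eq_conv_conj take_map drop_map)+
    moreover have "is_path Ed rg sc (take ?k p)" "is_path Ed rg sc (drop ?k p)"
      using p(1) k by (simp_all add: is_path_take is_path_drop)
    moreover have "rg (last (take ?k p)) = sc (hd (drop ?k p))" using is_path_split p(1) k .
    ultimately show "x \<in> relr Ed rg sc lab (relr Ed rg sc lab A u) v"
      using u v p k unfolding relr_def by (fastforce intro!: exI[of _ "take ?k p"])
  qed
qed

lemma Lstar_prefix: "u @ v \<in> Lstar Ed rg sc lab \<Longrightarrow> u \<in> Lstar Ed rg sc lab"
proof (cases "u = []")
  case False
  assume "u @ v \<in> Lstar Ed rg sc lab"
  then obtain p where p: "is_path Ed rg sc p" "map lab p = u @ v"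
    using False by (auto simp: Lstar_def Lplus_def)
  have "is_path Ed rg sc (take (length u) p)" using p(1) False by (simp add: is_path_take)
  moreover have "map lab (take (length u) p) = u" using p(2) by (metis append_eq_conv_conj take_map)
  ultimately show ?thesis by (auto simp: Lstar_def Lplus_def)
qed (simp add: Lstar_def)

lemma Lstar_suffix: "u @ v \<in> Lstar Ed rg sc lab \<Longrightarrow> v \<in> Lstar Ed rg sc lab"
proof (cases "v = []")
  case False
  assume "u @ v \<in> Lstar Ed rg sc lab"
  then obtain p where p: "is_path Ed rg sc p" "map lab p = u @ v"
    using False by (auto simp: Lstar_def Lplus_def)
  have "length u < length p" using arg_cong[OF p(2), of length] False by simp
  then have "is_path Ed rg sc (drop (length u) p)" using p(1) by (simp add: is_path_drop)
  moreover have "map lab (drop (length u) p) = v" using p(2) by (metis append_eq_conv_conj drop_map)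
  ultimately show ?thesis by (auto simp: Lstar_def Lplus_def)
qed (simp add: Lstar_def)

lemma Lplus_iff_Lstar: "w \<in> Lplus Ed rg sc lab \<longleftrightarrow> w \<in> Lstar Ed rg sc lab \<and> w \<noteq> []"
  by (auto simp: Lstar_def Lplus_def is_path_def)

lemma ES_set_Some_iff:
  "Some (a, A, a) \<in> ES_set V Ed rg sc lab B \<longleftrightarrow>
     a \<in> Lstar Ed rg sc lab \<and> A \<noteq> {} \<and> A \<in> Bsub V Ed rg sc lab B a"
  unfolding ES_set_def S_set_def by blast

lemma ES_le_Some_iff:
  "ES_le Ed rg sc lab (Some (a, A, a)) (Some (b, C, b)) \<longleftrightarrow>
     A \<noteq> {} \<and> (\<exists>h. a = b @ h \<and> A \<subseteq> relr Ed rg sc lab C h)"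
proof (cases "\<exists>c. b = a @ c")
  case True
  then obtain c where b: "b = a @ c" by blast
  show ?thesis by (auto simp: ES_le_def Let_def b)
next
  case False
  then show ?thesis by (auto simp: ES_le_def Let_def Int_absorb2)
qed

locale ES_filter_of_labelled_space =
  fixes V :: "'v set" and Ed :: "'e set" and rg sc :: "'e \<Rightarrow> 'v" and lab :: "'e \<Rightarrow> 'a"
    and B :: "'v set set" and \<xi> :: "('a, 'v) selt set"
  assumes wlr: "weakly_left_resolving V Ed rg sc lab B"
    and filt: "ES_filter V Ed rg sc lab B \<xi>"
begin

abbreviation r :: "'v set \<Rightarrow> 'a list \<Rightarrow> 'v set" where
  "r \<equiv> relr Ed rg sc lab"

lemma B_Pow: "B \<subseteq> Pow V"
  and B_Int: "A \<in> B \<Longrightarrow> C \<in> B \<Longrightarrow> A \<inter> C \<in> B"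
  and relr_V_in_B: "w \<in> Lplus Ed rg sc lab \<Longrightarrow> r V w \<in> B"
  using wlr unfolding weakly_left_resolving_def labelled_space_def accommodating_def by blast+

lemma relr_in_B: "A \<in> B \<Longrightarrow> w \<in> Lstar Ed rg sc lab \<Longrightarrow> r A w \<in> B"
  using wlr unfolding weakly_left_resolving_def labelled_space_def accommodating_def
  by (cases "w = []") (auto simp: Lplus_iff_Lstar)

lemma relr_Int:
  "A \<in> B \<Longrightarrow> C \<in> B \<Longrightarrow> w \<in> Lstar Ed rg sc lab \<Longrightarrow> r (A \<inter> C) w = r A w \<inter> r C w"
  using wlr unfolding weakly_left_resolving_def by (cases "w = []") (auto simp: Lplus_iff_Lstar)

lemma Bsub_Nil: "Bsub V Ed rg sc lab B [] = B"
  using B_Pow by (auto simp: Bsub_def)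

lemma filter_subset: "\<xi> \<subseteq> ES_set V Ed rg sc lab B"
  and None_notin_filter: "None \<notin> \<xi>"
  and filter_upward: "x \<in> \<xi> \<Longrightarrow> y \<in> ES_set V Ed rg sc lab B \<Longrightarrow> ES_le Ed rg sc lab x y \<Longrightarrow> y \<in> \<xi>"
  and filter_down_directed: "x \<in> \<xi> \<Longrightarrow> y \<in> \<xi> \<Longrightarrow> \<exists>z\<in>\<xi>. ES_le Ed rg sc lab z x \<and> ES_le Ed rg sc lab z y"
  using filt unfolding ES_filter_def is_filter_def by blast+

lemma filter_elem:
  assumes "x \<in> \<xi>"
  obtains a A where "x = Some (a, A, a)" "a \<in> Lstar Ed rg sc lab" "A \<noteq> {}"
    "A \<in> Bsub V Ed rg sc lab B a"
proof -
  have E: "x \<in> ES_set V Ed rg sc lab B" using assms filter_subset by blast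
  moreover have "x \<noteq> None" using assms None_notin_filter by metis
  ultimately obtain a A where x: "x = Some (a, A, a)" unfolding ES_set_def by blast
  with E have "a \<in> Lstar Ed rg sc lab" "A \<noteq> {}" "A \<in> Bsub V Ed rg sc lab B a"
    by (simp_all add: ES_set_Some_iff)
  with x show thesis by (rule that)
qed

lemma filter_common_lower_bound:
  assumes "Some (a, A, a) \<in> \<xi>" "Some (b, C, b) \<in> \<xi>"
  obtains g W h k where "Some (g, W, g) \<in> \<xi>" "g = a @ h" "W \<subseteq> r A h" "g = b @ k" "W \<subseteq> r C k"
proof -
  obtain x where "x \<in> \<xi>" and x: "ES_le Ed rg sc lab x (Some (a, A, a))" "ES_le Ed rg sc lab x (Some (b, C, b))"
    using filter_down_directed[OF assms] by blast
  from \<open>x \<in> \<xi>\<close> obtain g W where "x = Some (g, W, g)" by (rule filter_elem)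
  with \<open>x \<in> \<xi>\<close> x show thesis by (auto simp: ES_le_Some_iff intro: that)
qed

definition slice :: "'a list \<Rightarrow> 'v set set" where
  "slice w = {A \<in> B. Some (w, A, w) \<in> \<xi>}"

text \<open>The hypotheses say \<open>(w h, W, w h) \<le> (w, A, w)\<close>.\<close>
lemma slice_if_below:
  assumes W: "Some (w @ h, W, w @ h) \<in> \<xi>" and A: "A \<in> Bsub V Ed rg sc lab B w"
    and WA: "W \<subseteq> r A h"
  shows "A \<in> slice w"
proof -
  from W obtain "w @ h \<in> Lstar Ed rg sc lab" "W \<noteq> {}" by (rule filter_elem) auto
  with WA have "w \<in> Lstar Ed rg sc lab" "A \<noteq> {}" by (auto dest: Lstar_prefix)
  with A have "Some (w, A, w) \<in> ES_set V Ed rg sc lab B" by (simp add: ES_set_Some_iff)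
  moreover have "ES_le Ed rg sc lab (Some (w @ h, W, w @ h)) (Some (w, A, w))"
    using WA \<open>W \<noteq> {}\<close> by (auto simp: ES_le_Some_iff)
  ultimately have "Some (w, A, w) \<in> \<xi>"
    using W filter_upward by blast
  with A show ?thesis by (simp add: slice_def Bsub_def)
qed

lemma slice_subset_Bsub: "slice w \<subseteq> Bsub V Ed rg sc lab B w"
  by (auto simp: slice_def elim: filter_elem)

lemma empty_notin_slice: "{} \<notin> slice w"
  by (auto simp: slice_def elim: filter_elem)

lemma slice_upward:
  "A \<in> slice w \<Longrightarrow> C \<in> Bsub V Ed rg sc lab B w \<Longrightarrow> A \<subseteq> C \<Longrightarrow> C \<in> slice w"
  using slice_if_below[of w "[]" A C] by (simp add: slice_def)

lemma slice_Int:
  assumes A: "A \<in> slice w" and C: "C \<in> slice w"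
  shows "A \<inter> C \<in> slice w"
proof -
  obtain g W h where g: "Some (g, W, g) \<in> \<xi>" "g = w @ h" and "W \<subseteq> r A h" "W \<subseteq> r C h"
    using A C unfolding slice_def by (auto elim: filter_common_lower_bound)
  moreover have "h \<in> Lstar Ed rg sc lab" using g by (auto elim!: filter_elem dest: Lstar_suffix)
  ultimately have "W \<subseteq> r (A \<inter> C) h" using A C by (simp add: relr_Int slice_def)
  moreover have "A \<inter> C \<in> Bsub V Ed rg sc lab B w"
    using A C slice_subset_Bsub by (auto simp: Bsub_def intro: B_Int)
  ultimately show ?thesis using g slice_if_below by blast
qed

lemma B_filter_slice: "slice w \<noteq> {} \<Longrightarrow> B_filter (Bsub V Ed rg sc lab B w) (slice w)"
  unfolding B_filter_def is_filter_def
  using slice_subset_Bsub empty_notin_slice slice_upward slice_Int by (metis Int_lower1 Int_lower2)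

lemma relr_V_in_slice:
  assumes "Some (u @ v, C, u @ v) \<in> \<xi>" and "u \<noteq> []"
  shows "r V u \<in> slice u"
proof -
  from assms(1) obtain "u @ v \<in> Lstar Ed rg sc lab" "C \<subseteq> r V (u @ v)"
    by (rule filter_elem) (auto simp: Bsub_def)
  then have "u \<in> Lplus Ed rg sc lab" using \<open>u \<noteq> []\<close> by (auto simp: Lplus_iff_Lstar dest: Lstar_prefix)
  then have "r V u \<in> Bsub V Ed rg sc lab B u" by (simp add: Bsub_def relr_V_in_B)
  moreover have "C \<subseteq> r (r V u) v" using \<open>C \<subseteq> r V (u @ v)\<close> by (simp add: relr_append)
  ultimately show ?thesis using assms(1) slice_if_below by blast
qed

lemma relr_in_slice:
  assumes A: "A \<in> slice u" and D: "D \<in> slice (u @ v)"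
  shows "r A v \<in> slice (u @ v)"
proof -
  obtain g W h k where g: "Some (g, W, g) \<in> \<xi>" "g = u @ h" "W \<subseteq> r A h" "g = (u @ v) @ k"
    using A D unfolding slice_def by (auto elim: filter_common_lower_bound)
  then have "W \<subseteq> r (r A v) k" by (simp add: relr_append)
  moreover have "r A v \<in> Bsub V Ed rg sc lab B (u @ v)"
  proof -
    have "v \<in> Lstar Ed rg sc lab"
      using D by (auto simp: slice_def elim!: filter_elem dest: Lstar_suffix)
    moreover have "r A v \<subseteq> r (r V u) v"
      using A slice_subset_Bsub by (intro relr_mono) (auto simp: Bsub_def)
    ultimately show ?thesis using A by (auto simp: Bsub_def slice_def relr_append intro: relr_in_B)
  qed
  ultimately show ?thesis using g slice_if_below by (metis append.assoc)
qed

lemma slice_eq_preimage: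
  assumes "slice (u @ v) \<noteq> {}"
  shows "slice u = {A \<in> Bsub V Ed rg sc lab B u. r A v \<in> slice (u @ v)}"
proof (intro equalityI subsetI CollectI conjI)
  fix A assume "A \<in> slice u"
  then show "A \<in> Bsub V Ed rg sc lab B u" using slice_subset_Bsub by blast
  show "r A v \<in> slice (u @ v)" using assms relr_in_slice \<open>A \<in> slice u\<close> by blast
next
  fix A assume "A \<in> {A \<in> Bsub V Ed rg sc lab B u. r A v \<in> slice (u @ v)}"
  then show "A \<in> slice u" using slice_if_below[of u v "r A v" A] by (simp add: slice_def)
qed

end

theorem mainTheorem11:
  fixes V :: "'v set" and Ed :: "'e set" and rg sc :: "'e \<Rightarrow> 'v" and lab :: "'e \<Rightarrow> 'a"
    and B :: "'v set set" and \<xi> :: "('a, 'v) selt set" and \<alpha> :: "'a list"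
    and F :: "nat \<Rightarrow> 'v set set"
  assumes wlr: "weakly_left_resolving V Ed rg sc lab B"
    and filt: "ES_filter V Ed rg sc lab B \<xi>"
    and ft: "finite_type \<xi>"
    and word: "is_word_of \<xi> \<alpha>"
    and F_def: "\<And>n. F n = {A \<in> B. Some (take n \<alpha>, A, take n \<alpha>) \<in> \<xi>}"
  shows "(\<forall>n. 1 \<le> n \<and> n \<le> length \<alpha> \<longrightarrow> B_filter (Bsub V Ed rg sc lab B (take n \<alpha>)) (F n))
       \<and> (F 0 = {} \<or> B_filter B (F 0))
       \<and> (\<forall>n m. n < m \<and> m \<le> length \<alpha> \<longrightarrow>
            F n = {A \<in> Bsub V Ed rg sc lab B (take n \<alpha>).
                     relr Ed rg sc lab A (drop n (take m \<alpha>)) \<in> F m})"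
proof -
  interpret ES_filter_of_labelled_space V Ed rg sc lab B \<xi>
    using wlr filt by unfold_locales
  have F: "F n = slice (take n \<alpha>)" for n by (simp add: F_def slice_def)
  obtain C where "Some (\<alpha>, C, \<alpha>) \<in> \<xi>"
    using word unfolding is_word_of_def filter_words_def by auto
  then have C: "Some (take n \<alpha> @ drop n \<alpha>, C, take n \<alpha> @ drop n \<alpha>) \<in> \<xi>" for n by simp
  have nonempty: "slice (take n \<alpha>) \<noteq> {}" if "1 \<le> n" "n \<le> length \<alpha>" for n
  proof -
    have "take n \<alpha> \<noteq> []" using that by auto
    then show ?thesis using relr_V_in_slice[OF C] by blast
  qed
  have F_preimage: "F n = {A \<in> Bsub V Ed rg sc lab B (take n \<alpha>). r A (drop n (take m \<alpha>)) \<in> F m}"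
    if "n < m" "m \<le> length \<alpha>" for n m
  proof -
    have take_m: "take n \<alpha> @ drop n (take m \<alpha>) = take m \<alpha>"
      using \<open>n < m\<close> by (metis append_take_drop_id less_imp_le_nat min.absorb1 take_take)
    have "slice (take n \<alpha> @ drop n (take m \<alpha>)) \<noteq> {}"
      unfolding take_m using nonempty that by simp
    from slice_eq_preimage[OF this] show ?thesis unfolding F take_m .
  qed
  have "slice [] = {} \<or> B_filter B (slice [])"
    using B_filter_slice[of "[]"] by (auto simp: Bsub_Nil)
  then show ?thesis
    using B_filter_slice nonempty F_preimage unfolding F by simp
qed

end
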